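(* Let $\langle M,\mathsf{S}\rangle$ be a sum structure. Then for all $x\in M$ and $X\subseteq M$: if $x\,\mathsf{S}_{\sqsubseteq_{\mathsf{S}}}\,X$ then $x\,\mathsf{S}\,X$.
   Context: For a set $M$ and a relation $\mathsf{S}\subseteq M\times\mathcal{P}(M)$ define: $x\sqsubseteq_{\mathsf{S}} y$ iff there is $X\subseteq M$ with $y\,\mathsf{S}\,X$ and $x\in X$; $\mathrm{I}(x)=\{y\in M\mid y\sqsubseteq_{\mathsf{S}} x\}$ and for $A\subseteq M$, $\mathrm{I}(A)=\bigcup_{a\in A}\mathrm{I}(a)$; $x$ s-overlaps $y$ iff there are $X,Y\subseteq M$ with $x\,\mathsf{S}\,X$, $y\,\mathsf{S}\,Y$, $X\cap Y\neq\emptyset$; a set $A\subseteq M$ is pre-dense in $B\subseteq M$ iff for every $b\in B$ there is $a\in A$ such that $a$ s-overlaps $b$. Overlap w.r.t. $\sqsubseteq_{\mathsf{S}}$: $x\circ y$ iff there is $z\in M$ with $z\sqsubseteq_{\mathsf{S}} x$ and $z\sqsubseteq_{\mathsf{S}} y$. The induced sum: $x\,\mathsf{S}_{\sqsubseteq_{\mathsf{S}}}\,X$ iff every $y\in X$ satisfies $y\sqsubseteq_{\mathsf{S}} x$, and for every $z\in M$ with $z\sqsubseteq_{\mathsf{S}} x$ there is $y\in X$ with $y\circ z$. A sum structure is a pair $\langle M,\mathsf{S}\rangle$ satisfying: (S1) for every non-empty $X\subseteq M$ there is $x\in M$ with $x\,\mathsf{S}\,X$; (S2) $x\,\mathsf{S}\,X\wedge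 y\,\mathsf{S}\,X\to x=y$; (S3) $x\,\mathsf{S}\,X\wedge y\,\mathsf{S}\,Y\wedge x\in Y\to y\,\mathsf{S}\,(X\cup Y)$; (S4) if $x\,\mathsf{S}\,X$, $x\,\mathsf{S}\,Y$ and $y\in Y$, then there are $z\in X$ and $Z,U\subseteq M$ with $z\,\mathsf{S}\,Z$, $y\,\mathsf{S}\,U$ and $Z\cap U\neq\emptyset$; (S5) for all $x\in M$ and $X\subseteq M$: if $X$ is pre-dense in $\mathrm{I}(x)$ then $x\,\mathsf{S}\,(\mathrm{I}(x)\cap\mathrm{I}(X))$. *)

theory Defs
  imports Main
begin

definition spart :: "'a set \<Rightarrow> ('a \<Rightarrow> 'a set \<Rightarrow> bool) \<Rightarrow> 'a \<Rightarrow> 'a \<Rightarrow> bool" where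
  "spart M S x y \<longleftrightarrow> (\<exists>X. X \<subseteq> M \<and> S y X \<and> x \<in> X)"

definition Ideal :: "'a set \<Rightarrow> ('a \<Rightarrow> 'a set \<Rightarrow> bool) \<Rightarrow> 'a \<Rightarrow> 'a set" where
  "Ideal M S x = {y \<in> M. spart M S y x}"

definition IdealSet :: "'a set \<Rightarrow> ('a \<Rightarrow> 'a set \<Rightarrow> bool) \<Rightarrow> 'a set \<Rightarrow> 'a set" where
  "IdealSet M S A = (\<Union>a\<in>A. Ideal M S a)"

definition soverlap :: "'a set \<Rightarrow> ('a \<Rightarrow> 'a set \<Rightarrow> bool) \<Rightarrow> 'a \<Rightarrow> 'a \<Rightarrow> bool" where
  "soverlap M S x y \<longleftrightarrow> (\<exists>X Y. X \<subseteq> M \<and> Y \<subseteq> M \<and> S x X \<and> S y Y \<and> X \<inter> Y \<noteq> {})"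

definition predense :: "'a set \<Rightarrow> ('a \<Rightarrow> 'a set \<Rightarrow> bool) \<Rightarrow> 'a set \<Rightarrow> 'a set \<Rightarrow> bool" where
  "predense M S A B \<longleftrightarrow> (\<forall>b\<in>B. \<exists>a\<in>A. soverlap M S a b)"

definition ovlp :: "'a set \<Rightarrow> ('a \<Rightarrow> 'a set \<Rightarrow> bool) \<Rightarrow> 'a \<Rightarrow> 'a \<Rightarrow> bool" where
  "ovlp M S x y \<longleftrightarrow> (\<exists>z\<in>M. spart M S z x \<and> spart M S z y)"

definition induced_sum :: "'a set \<Rightarrow> ('a \<Rightarrow> 'a set \<Rightarrow> bool) \<Rightarrow> 'a \<Rightarrow> 'a set \<Rightarrow> bool" where
  "induced_sum M S x X \<longleftrightarrow>
     (\<forall>y\<in>X. spart M S y x) \<and> (\<forall>z\<in>M. spart M S z x \<longrightarrow> (\<exists>y\<in>X. ovlp M S y z))"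

definition sum_structure :: "'a set \<Rightarrow> ('a \<Rightarrow> 'a set \<Rightarrow> bool) \<Rightarrow> bool" where
  "sum_structure M S \<longleftrightarrow>
     (\<forall>x X. S x X \<longrightarrow> x \<in> M \<and> X \<subseteq> M) \<and>
     (\<forall>X. X \<subseteq> M \<and> X \<noteq> {} \<longrightarrow> (\<exists>x\<in>M. S x X)) \<and>
     (\<forall>x y X. S x X \<and> S y X \<longrightarrow> x = y) \<and>
     (\<forall>x y X Y. S x X \<and> S y Y \<and> x \<in> Y \<longrightarrow> S y (X \<union> Y)) \<and>
     (\<forall>x X Y y. S x X \<and> S x Y \<and> y \<in> Y \<longrightarrow>
        (\<exists>z\<in>X. \<exists>Z U. Z \<subseteq> M \<and> U \<subseteq> M \<and> S z Z \<and> S y U \<and> Z \<inter> U \<noteq> {})) \<and>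
     (\<forall>x\<in>M. \<forall>X. X \<subseteq> M \<and> predense M S X (Ideal M S x) \<longrightarrow>
        S x (Ideal M S x \<inter> IdealSet M S X))"

end

theory Submission
  imports Defs
begin

text \<open>If \<open>X\<close> is pre-dense in \<open>I(w)\<close> and every element of \<open>X\<close> is a part of \<open>w\<close>, then
  \<open>I(X) \<subseteq> I(w)\<close> and axiom (S5) makes \<open>w\<close> a sum of \<open>I(X)\<close>. Both \<open>x\<close> and any sum \<open>w\<close> of \<open>X\<close>
  qualify: for \<open>x\<close> pre-density comes from the overlap clause of the induced sum, for \<open>w\<close> from
  (S4). By uniqueness of sums (S2), \<open>w = x\<close>. If \<open>X\<close> is empty, \<open>I(X)\<close> is empty as well.\<close>

lemma
  assumes "sum_structure M S"
  shows sum_structure_sum_exists: "X \<subseteq> M \<Longrightarrow> X \<noteq> {} \<Longrightarrow> \<exists>x\<in>M. S x X"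
    and sum_structure_sum_unique: "S x X \<Longrightarrow> S y X \<Longrightarrow> x = y"
    and sum_structure_sum_Un: "S x X \<Longrightarrow> S y Y \<Longrightarrow> x \<in> Y \<Longrightarrow> S y (X \<union> Y)"
    and sum_structure_soverlap: "S x X \<Longrightarrow> S x Y \<Longrightarrow> y \<in> Y \<Longrightarrow> \<exists>z\<in>X. soverlap M S z y"
    and sum_structure_sum_Ideal_predense: "x \<in> M \<Longrightarrow> A \<subseteq> M \<Longrightarrow> predense M S A (Ideal M S x) \<Longrightarrow>
      S x (Ideal M S x \<inter> IdealSet M S A)"
proof -
  note ax = assms[unfolded sum_structure_def, THEN conjunct2]
  show "X \<subseteq> M \<Longrightarrow> X \<noteq> {} \<Longrightarrow> \<exists>x\<in>M. S x X"
    using ax[THEN conjunct1] by simp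
  show "S x X \<Longrightarrow> S y X \<Longrightarrow> x = y"
    using ax[THEN conjunct2, THEN conjunct1] by blast
  show "S x X \<Longrightarrow> S y Y \<Longrightarrow> x \<in> Y \<Longrightarrow> S y (X \<union> Y)"
    using ax[THEN conjunct2, THEN conjunct2, THEN conjunct1] by simp
  show "S x X \<Longrightarrow> S x Y \<Longrightarrow> y \<in> Y \<Longrightarrow> \<exists>z\<in>X. soverlap M S z y"
    using ax[THEN conjunct2, THEN conjunct2, THEN conjunct2, THEN conjunct1, rule_format, of x X Y y]
    unfolding soverlap_def by simp
  show "x \<in> M \<Longrightarrow> A \<subseteq> M \<Longrightarrow> predense M S A (Ideal M S x) \<Longrightarrow>
      S x (Ideal M S x \<inter> IdealSet M S A)"
    using ax[THEN conjunct2, THEN conjunct2, THEN conjunct2, THEN conjunct2] by simp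
qed

lemma spart_of_sum: "S x X \<Longrightarrow> X \<subseteq> M \<Longrightarrow> \<forall>y\<in>X. spart M S y x"
  unfolding spart_def by blast

lemma spart_trans:
  assumes "sum_structure M S" and "spart M S v y" and "spart M S y x"
  shows "spart M S v x"
proof -
  from assms(2) obtain V where V: "V \<subseteq> M" "S y V" "v \<in> V" unfolding spart_def by blast
  from assms(3) obtain Y where Y: "Y \<subseteq> M" "S x Y" "y \<in> Y" unfolding spart_def by blast
  have "S x (V \<union> Y)" using sum_structure_sum_Un[OF assms(1) V(2) Y(2,3)] .
  with V Y show ?thesis unfolding spart_def by (intro exI[of _ "V \<union> Y"]) auto
qed

lemma soverlap_if_ovlp:
  assumes "ovlp M S x y"
  shows "soverlap M S x y"
proof -
  from assms obtain z where "spart M S z x" "spart M S z y" unfolding ovlp_def by blast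
  then obtain X Y where "X \<subseteq> M" "S x X" "z \<in> X" "Y \<subseteq> M" "S y Y" "z \<in> Y"
    unfolding spart_def by blast
  then show ?thesis unfolding soverlap_def by blast
qed

lemma IdealSet_subset_Ideal:
  assumes "sum_structure M S" and "\<forall>y\<in>X. spart M S y w"
  shows "IdealSet M S X \<subseteq> Ideal M S w"
proof
  fix v assume "v \<in> IdealSet M S X"
  then obtain y where "y \<in> X" "v \<in> M" "spart M S v y" unfolding IdealSet_def Ideal_def by blast
  with spart_trans[OF assms(1)] assms(2) show "v \<in> Ideal M S w" unfolding Ideal_def by blast
qed

lemma predense_Ideal_if_induced_sum:
  assumes "induced_sum M S x X"
  shows "predense M S X (Ideal M S x)"
  unfolding predense_def
proof
  fix b assume "b \<in> Ideal M S x"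
  then have "b \<in> M" "spart M S b x" unfolding Ideal_def by auto
  with assms obtain y where "y \<in> X" "ovlp M S y b" unfolding induced_sum_def by blast
  then show "\<exists>a\<in>X. soverlap M S a b" by (blast intro: soverlap_if_ovlp)
qed

lemma predense_Ideal_if_sum:
  assumes "sum_structure M S" and "S w X"
  shows "predense M S X (Ideal M S w)"
  unfolding predense_def
proof
  fix b assume "b \<in> Ideal M S w"
  then obtain B where "S w B" "b \<in> B" unfolding Ideal_def spart_def by blast
  then show "\<exists>a\<in>X. soverlap M S a b" using sum_structure_soverlap[OF assms] by blast
qed

lemma sum_IdealSet:
  assumes "sum_structure M S" and "w \<in> M" and "X \<subseteq> M"
    and "predense M S X (Ideal M S w)" and "\<forall>y\<in>X. spart M S y w"
  shows "S w (IdealSet M S X)"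
proof -
  have "Ideal M S w \<inter> IdealSet M S X = IdealSet M S X"
    using IdealSet_subset_Ideal[OF assms(1,5)] by blast
  with sum_structure_sum_Ideal_predense[OF assms(1-4)] show ?thesis by simp
qed

theorem lemma3p11:
  fixes M :: "'a set" and S :: "'a \<Rightarrow> 'a set \<Rightarrow> bool"
  assumes "sum_structure M S"
    and "x \<in> M" and "X \<subseteq> M"
    and "induced_sum M S x X"
  shows "S x X"
proof -
  have parts_x: "\<forall>y\<in>X. spart M S y x"
    using assms(4) unfolding induced_sum_def by blast
  have Sx: "S x (IdealSet M S X)"
    using sum_IdealSet[OF assms(1-3) predense_Ideal_if_induced_sum[OF assms(4)] parts_x] .
  show ?thesis
  proof (cases "X = {}")
    case True
    with Sx show ?thesis unfolding IdealSet_def by simp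
  next
    case False
    then obtain w where w: "w \<in> M" "S w X"
      using sum_structure_sum_exists[OF assms(1,3)] by blast
    have "S w (IdealSet M S X)"
      using sum_IdealSet[OF assms(1) w(1) assms(3) predense_Ideal_if_sum[OF assms(1) w(2)]
          spart_of_sum[of S w X M, OF w(2) assms(3)]] .
    with Sx have "w = x" using sum_structure_sum_unique[OF assms(1)] by blast
    with w show ?thesis by simp
  qed
qed

end
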